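(* Let $\psi$ be a CNF formula with only positive literals, with clauses $C_1,\dots,C_m$ each consisting of three distinct variables, and variables $x_1,\dots,x_p$, in which every variable appears in at least $3$ clauses. Let $G$ be the graph constructed as follows: (1) for each variable $x_i$ create a cycle $D_i$ whose number of vertices equals the number of clauses containing $x_i$; (2) add a vertex $a$ adjacent to every vertex of all cycles $D_1,\dots,D_p$; (3) for each clause $\{x_i,x_j,x_k\}$ add a vertex $u_{ijk}$ adjacent to one vertex of each of $D_i,D_j,D_k$, choosing in each cycle a vertex not yet adjacent to any clause-vertex; (4) subdivide once every edge of the cycles $D_1,\dots,D_p$ and every edge incident to $a$. If $G$ has a $1/2$-shallow topological minor of density at least $\frac{5m}{2m+1}$, then $\psi$ has an assignment in which every clause contains exactly one true variable.
   Context: A graph $H$ is a $1/2$-shallow topological minor of $G$ if some graph obtained from $H$ by subdividing each edge at most once is isomorphic to a subgraph of $G$. The density of $H$ is $\|H\|/|H|$ (number of edges divided by number of vertices). *)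

theory Defs
  imports Complex_Main
begin

definition graph :: "'a set \<Rightarrow> 'a set set \<Rightarrow> bool" where
  "graph V E \<longleftrightarrow> finite V \<and>
     (\<forall>e\<in>E. \<exists>u v. u \<noteq> v \<and> e = {u, v} \<and> u \<in> V \<and> v \<in> V)"

definition density :: "'a set \<Rightarrow> 'a set set \<Rightarrow> real" where
  "density V E = real (card E) / real (card V)"

text \<open>(VH,EH) is a 1/2-shallow topological minor of (VG,EG): a graph obtained from H by
  subdividing each edge at most once (the edges in S are subdivided once, the others are
  kept) is isomorphic to a subgraph of G.  The isomorphism maps the original vertices via
  the injective map f and the subdivision vertex of an edge e in S to s e; subdivision
  vertices are pairwise distinct and distinct from the branch vertices.\<close>

definition half_shallow_top_minor ::
  "'h set \<Rightarrow> 'h set set \<Rightarrow> 'g set \<Rightarrow> 'g set set \<Rightarrow> bool" where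
  "half_shallow_top_minor VH EH VG EG \<longleftrightarrow> graph VH EH \<and>
     (\<exists>(f :: 'h \<Rightarrow> 'g) (s :: 'h set \<Rightarrow> 'g) S.
        S \<subseteq> EH \<and> inj_on f VH \<and> f ` VH \<subseteq> VG \<and>
        (\<forall>e\<in>EH - S. f ` e \<in> EG) \<and>
        inj_on s S \<and>
        (\<forall>e\<in>S. s e \<in> VG - f ` VH \<and> (\<forall>x\<in>e. {f x, s e} \<in> EG)))"

text \<open>Variables are 0..<p, clauses are the list C (clause j is the set C!j of variable
  indices).  For variable i, the cycle D_i has one vertex Cyc i j for each clause j
  containing x_i; this vertex is the one adjacent to the clause vertex Cl j.  The cyclic
  order of D_i is given by the list ord i (an enumeration of the clauses containing x_i).
  Apex is the vertex a; SA i j subdivides the edge a -- Cyc i j; SC i j subdivides the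
  cycle edge from Cyc i j to its successor on D_i.\<close>

datatype vtx = Apex | Cyc nat nat | Cl nat | SA nat nat | SC nat nat

definition occ :: "nat set list \<Rightarrow> nat \<Rightarrow> nat set" where
  "occ C i = {j. j < length C \<and> i \<in> C ! j}"

definition valid_orders :: "nat \<Rightarrow> nat set list \<Rightarrow> (nat \<Rightarrow> nat list) \<Rightarrow> bool" where
  "valid_orders p C ord \<longleftrightarrow> (\<forall>i<p. distinct (ord i) \<and> set (ord i) = occ C i)"

definition cverts :: "nat \<Rightarrow> nat set list \<Rightarrow> (nat \<Rightarrow> nat list) \<Rightarrow> vtx set" where
  "cverts p C ord =
     {Apex}
     \<union> {Cyc i j | i j. i < p \<and> j \<in> set (ord i)}
     \<union> {SA i j | i j. i < p \<and> j \<in> set (ord i)}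
     \<union> {SC i j | i j. i < p \<and> j \<in> set (ord i)}
     \<union> {Cl j | j. j < length C}"

definition cedges :: "nat \<Rightarrow> nat set list \<Rightarrow> (nat \<Rightarrow> nat list) \<Rightarrow> vtx set set" where
  "cedges p C ord =
     {{Apex, SA i j} | i j. i < p \<and> j \<in> set (ord i)}
     \<union> {{SA i j, Cyc i j} | i j. i < p \<and> j \<in> set (ord i)}
     \<union> {{Cyc i (ord i ! k), SC i (ord i ! k)} | i k. i < p \<and> k < length (ord i)}
     \<union> {{SC i (ord i ! k), Cyc i (ord i ! ((k + 1) mod length (ord i)))} | i k.
          i < p \<and> k < length (ord i)}
     \<union> {{Cl j, Cyc i j} | i j. j < length C \<and> i \<in> C ! j}"

end

theory Submission
  imports Defs
begin

text \<open>Each edge of H, seen from one of its ends x, occupies one G-edge at the branch vertex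
  f x: the first edge of the path representing it.  Distinct half-edges occupy distinct G-edges,
  so 2|E(H)| is at most the sum over the branch vertices of their degrees in G.  Cycle vertices
  have degree 4, clause and cycle-subdivision vertices at most 3, apex-subdivision vertices 2,
  and the apex can occupy at most one edge per branch vertex on a cycle or an apex edge.  When
  the clause vertex of a clause is not a branch vertex, at most two cycle vertices of that clause
  can occupy all four of their edges, since their clause edges all lie on the single H-edge
  subdivided by the clause vertex.  With the density at least 5m/(2m+1) these bounds force the
  branch vertices to be the apex together with exactly 2m cycle vertices using all their edges,
  two in every clause.  Such a cycle vertex forces its successor on the cycle to be a branch
  vertex too, so every cycle lies entirely inside or entirely outside the minor; making true the
  variables whose cycle lies outside satisfies exactly one variable per clause.\<close>

definition incident_edges :: "'a set set \<Rightarrow> 'a \<Rightarrow> 'a set set" where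
  "incident_edges E v = {g \<in> E. v \<in> g}"

lemma incident_edges_bound:
  assumes "incident_edges E v \<subseteq> (\<lambda>u. {v, u}) ` N" and "finite N"
  shows "finite (incident_edges E v)" and "card (incident_edges E v) \<le> card N"
proof -
  show "finite (incident_edges E v)"
    using assms by (meson finite_imageI finite_subset)
  have "card (incident_edges E v) \<le> card ((\<lambda>u. {v, u}) ` N)"
    using assms by (intro card_mono) auto
  also have "\<dots> \<le> card N"
    using assms(2) by (rule card_image_le)
  finally show "card (incident_edges E v) \<le> card N" .
qed

lemma neighbour_mem:
  assumes "incident_edges E v \<subseteq> (\<lambda>u. {v, u}) ` N" "{u, v} \<in> E" "v \<notin> N"
  shows "u \<in> N"
proof -
  obtain u' where "u' \<in> N" "{u, v} = {v, u'}"
    using assms(1,2) unfolding incident_edges_def by blast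
  then show ?thesis using assms(3) by (auto simp: doubleton_eq_iff)
qed

lemma card_nth_eq_le_1:
  "distinct xs \<Longrightarrow> card {k. k < length xs \<and> xs ! k = a} \<le> 1"
  unfolding One_nat_def by (subst card_le_Suc0_iff_eq) (auto simp: nth_eq_iff_index_eq)

lemma card_nth_Suc_mod_eq_le_1:
  assumes "distinct xs"
  shows "card {k. k < length xs \<and> xs ! (Suc k mod length xs) = a} \<le> 1"
proof -
  have "{k. k < length xs \<and> xs ! (Suc k mod length xs) = a} =
      {k. k < length (rotate1 xs) \<and> rotate1 xs ! k = a}"
    by (auto simp: nth_rotate1)
  then show ?thesis using card_nth_eq_le_1[of "rotate1 xs" a] assms by simp
qed

locale half_shallow_embedding =
  fixes VH :: "'h set" and EH :: "'h set set" and VG :: "'g set" and EG :: "'g set set"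
    and f :: "'h \<Rightarrow> 'g" and s :: "'h set \<Rightarrow> 'g" and S :: "'h set set"
  assumes graph_H: "graph VH EH"
    and subdivided_subset: "S \<subseteq> EH"
    and inj_f: "inj_on f VH"
    and f_into: "f ` VH \<subseteq> VG"
    and unsubdivided_edge: "\<forall>e\<in>EH - S. f ` e \<in> EG"
    and inj_s: "inj_on s S"
    and subdivided_edge: "\<forall>e\<in>S. s e \<in> VG - f ` VH \<and> (\<forall>x\<in>e. {f x, s e} \<in> EG)"

lemma half_shallow_top_minorE:
  assumes "half_shallow_top_minor VH EH VG EG"
  obtains f s S where "half_shallow_embedding VH EH VG EG f s S"
  using assms unfolding half_shallow_top_minor_def
  by (elim conjE exE) (rule that[unfolded half_shallow_embedding_def], intro conjI; assumption)

context half_shallow_embedding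
begin

lemma edge_endpoints: "e \<in> EH \<Longrightarrow> \<exists>u v. u \<noteq> v \<and> e = {u, v} \<and> u \<in> VH \<and> v \<in> VH"
  using graph_H unfolding graph_def by blast

lemma edge_other_end:
  assumes "e \<in> EH" "x \<in> e"
  obtains y where "y \<noteq> x" "e = {x, y}" "x \<in> VH" "y \<in> VH"
proof -
  obtain a b where ab: "a \<noteq> b" "e = {a, b}" "a \<in> VH" "b \<in> VH"
    using edge_endpoints assms(1) by blast
  show thesis
  proof (cases "x = a")
    case True
    then show thesis using ab by (intro that[of b]) auto
  next
    case False
    then have "x = b" using ab assms(2) by blast
    then show thesis using ab by (intro that[of a]) (auto simp: insert_commute)
  qed
qed

lemma edge_subset: "e \<in> EH \<Longrightarrow> e \<subseteq> VH"
  by (drule edge_endpoints) auto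

lemma card_edge: "e \<in> EH \<Longrightarrow> card e = 2"
  by (drule edge_endpoints) auto

lemma finite_VH: "finite VH"
  using graph_H unfolding graph_def by (rule conjunct1)

lemma finite_EH: "finite EH"
proof -
  have "EH \<subseteq> Pow VH" using edge_subset by blast
  then show ?thesis using finite_VH by (simp add: finite_subset)
qed

lemma subdivision_not_branch: "e \<in> S \<Longrightarrow> s e \<notin> f ` VH"
  using subdivided_edge by blast

text \<open>The first edge of the path in G representing the H-edge e, traversed from f x.\<close>

definition edge_image :: "'h set \<Rightarrow> 'h \<Rightarrow> 'g set" where
  "edge_image e x = (if e \<in> S then {f x, s e} else f ` e)"

definition used_at :: "'g \<Rightarrow> 'g set set" where
  "used_at v = {edge_image e x | e x. e \<in> EH \<and> x \<in> e \<and> f x = v}"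

definition saturated :: "'g \<Rightarrow> bool" where
  "saturated v \<longleftrightarrow> incident_edges EG v \<subseteq> used_at v"

lemma edge_image_incident: "e \<in> EH \<Longrightarrow> x \<in> e \<Longrightarrow> edge_image e x \<in> incident_edges EG (f x)"
  using unsubdivided_edge subdivided_edge unfolding edge_image_def incident_edges_def by auto

lemma used_at_incident: "used_at v \<subseteq> incident_edges EG v"
  unfolding used_at_def using edge_image_incident by blast

lemma edge_image_inj:
  assumes e: "e \<in> EH" "x \<in> e" and e': "e' \<in> EH" "x \<in> e'"
    and eq: "edge_image e x = edge_image e' x"
  shows "e = e'"
proof -
  have image_branch: "f ` d \<subseteq> f ` VH" if "d \<in> EH" for d
    using edge_subset that by blast
  have "x \<in> VH" using e edge_subset by blast
  consider "e \<in> S" "e' \<in> S" | "e \<in> S" "e' \<notin> S" | "e \<notin> S" "e' \<in> S" | "e \<notin> S" "e' \<notin> S"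
    by blast
  then show ?thesis
  proof cases
    case 1
    with eq have "{f x, s e} = {f x, s e'}" unfolding edge_image_def by simp
    moreover have "s e \<noteq> f x" using subdivision_not_branch[OF 1(1)] \<open>x \<in> VH\<close> by blast
    ultimately have "s e = s e'" by (metis doubleton_eq_iff)
    then show ?thesis using inj_s 1 by (meson inj_onD)
  next
    case 2
    with eq have "s e \<in> f ` e'" unfolding edge_image_def by (metis insertCI)
    then show ?thesis using image_branch[OF e'(1)] subdivision_not_branch[OF 2(1)] by blast
  next
    case 3
    with eq have "s e' \<in> f ` e" unfolding edge_image_def by (metis insertCI)
    then show ?thesis using image_branch[OF e(1)] subdivision_not_branch[OF 3(2)] by blast
  next
    case 4
    with eq have "f ` e = f ` e'" unfolding edge_image_def by simp
    then show ?thesis using inj_f edge_subset e e' by (simp add: inj_on_image_eq_iff)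
  qed
qed

lemma double_card_edges_eq_sum_used_at:
  "2 * card EH = (\<Sum>v\<in>f ` VH. card (used_at v))"
proof -
  let ?dart = "\<lambda>(e, x). (f x, edge_image e x)"
  have inj: "inj_on ?dart (Sigma EH (\<lambda>e. e))"
  proof (rule inj_onI, clarify)
    fix e x e' x'
    assume "e \<in> EH" "x \<in> e" "e' \<in> EH" "x' \<in> e'" "f x = f x'"
      "edge_image e x = edge_image e' x'"
    moreover from this have "x = x'" using inj_f edge_subset by (meson inj_onD subsetD)
    ultimately show "e = e' \<and> x = x'" using edge_image_inj by blast
  qed
  have image: "?dart ` Sigma EH (\<lambda>e. e) = Sigma (f ` VH) used_at"
  proof (intro equalityI subsetI)
    fix d assume "d \<in> ?dart ` Sigma EH (\<lambda>e. e)"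
    then obtain e x where "e \<in> EH" "x \<in> e" "d = (f x, edge_image e x)" by auto
    then show "d \<in> Sigma (f ` VH) used_at" using edge_subset unfolding used_at_def by blast
  next
    fix d assume "d \<in> Sigma (f ` VH) used_at"
    then obtain e x where "e \<in> EH" "x \<in> e" "d = (f x, edge_image e x)"
      unfolding used_at_def by auto
    then show "d \<in> ?dart ` Sigma EH (\<lambda>e. e)" by force
  qed
  have fin_Sigma: "finite (Sigma EH (\<lambda>e. e))"
    using finite_EH finite_VH edge_subset by (auto intro: finite_subset)
  have fin_used: "finite (used_at v)" for v
  proof -
    have "used_at v \<subseteq> (\<lambda>(e, x). edge_image e x) ` Sigma EH (\<lambda>e. e)"
      unfolding used_at_def by auto
    then show ?thesis using fin_Sigma finite_subset by blast
  qed
  have "2 * card EH = (\<Sum>e\<in>EH. card e)"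
    using card_edge by simp
  also have "\<dots> = card (Sigma EH (\<lambda>e. e))"
    using finite_EH finite_VH edge_subset by (subst card_SigmaI) (auto intro: finite_subset)
  also have "\<dots> = card (Sigma (f ` VH) used_at)"
    using card_image[OF inj] image by simp
  also have "\<dots> = (\<Sum>v\<in>f ` VH. card (used_at v))"
    using finite_VH fin_used by simp
  finally show ?thesis .
qed

lemma used_through_subdivision:
  assumes used: "{v, w} \<in> used_at v" and w: "w \<notin> f ` VH"
  obtains e u where "e \<in> S" "s e = w" "f ` e = {v, u}" "u \<noteq> v" "u \<in> f ` VH" "{u, w} \<in> EG"
proof -
  obtain e x where e: "e \<in> EH" "x \<in> e" "f x = v" "{v, w} = edge_image e x"
    using used unfolding used_at_def by blast
  obtain y where y: "y \<noteq> x" "e = {x, y}" "x \<in> VH" "y \<in> VH"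
    using edge_other_end e by blast
  have eS: "e \<in> S"
  proof (rule ccontr)
    assume "e \<notin> S"
    then have "{v, w} = f ` e" using e unfolding edge_image_def by simp
    then have "w \<in> f ` VH" using y by auto
    then show False using w by blast
  qed
  have "s e \<noteq> v" using subdivision_not_branch[OF eS] e y by force
  moreover have "{v, w} = {v, s e}" using e eS unfolding edge_image_def by simp
  ultimately have sw: "s e = w" by (auto simp: doubleton_eq_iff)
  have "f y \<noteq> v" using inj_on_contraD[OF inj_f y(1)] y e(3) by simp
  moreover have "{f y, w} \<in> EG" using subdivided_edge eS y sw by auto
  ultimately show thesis using eS sw e y by (intro that[of e "f y"]) auto
qed

lemma card_used_at_le:
  assumes "incident_edges EG v \<subseteq> (\<lambda>u. {v, u}) ` N" "finite N" "card N \<le> d"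
  shows "card (used_at v) \<le> d"
  using card_mono[OF incident_edges_bound(1)[OF assms(1,2)] used_at_incident]
    incident_edges_bound(2)[OF assms(1,2)] assms(3) by linarith

lemma card_used_at_unsaturated:
  assumes "incident_edges EG v \<subseteq> (\<lambda>u. {v, u}) ` N" "finite N" "card N \<le> Suc d"
    and "\<not> saturated v"
  shows "card (used_at v) \<le> d"
proof -
  have "used_at v \<subset> incident_edges EG v"
    using assms(4) used_at_incident unfolding saturated_def by blast
  then have "card (used_at v) < card (incident_edges EG v)"
    by (rule psubset_card_mono[OF incident_edges_bound(1)[OF assms(1,2)]])
  then show ?thesis using incident_edges_bound(2)[OF assms(1,2)] assms(3) by linarith
qed

end

lemma Cl_edge: "j < length C \<Longrightarrow> i \<in> C ! j \<Longrightarrow> {Cl j, Cyc i j} \<in> cedges p C ord"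
  unfolding cedges_def by blast

lemma SC_edge:
  "i < p \<Longrightarrow> k < length (ord i) \<Longrightarrow>
    {Cyc i (ord i ! k), SC i (ord i ! k)} \<in> cedges p C ord"
  unfolding cedges_def by blast

lemma incident_edges_Apex:
  "incident_edges (cedges p C ord) Apex \<subseteq> {{Apex, SA i j} | i j. True}"
  unfolding incident_edges_def cedges_def by auto

lemma incident_edges_SA:
  "incident_edges (cedges p C ord) (SA i j) \<subseteq> (\<lambda>u. {SA i j, u}) ` {Apex, Cyc i j}"
  unfolding incident_edges_def cedges_def by (auto simp: insert_commute)

lemma incident_edges_Cl:
  "incident_edges (cedges p C ord) (Cl j) \<subseteq> (\<lambda>u. {Cl j, u}) ` (\<lambda>i. Cyc i j) ` (C ! j)"
  unfolding incident_edges_def cedges_def by auto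

lemma incident_edges_SC:
  assumes "distinct (ord i)" "k < length (ord i)"
  shows "incident_edges (cedges p C ord) (SC i (ord i ! k)) \<subseteq>
    (\<lambda>u. {SC i (ord i ! k), u}) `
      {Cyc i (ord i ! k), Cyc i (ord i ! (Suc k mod length (ord i)))}"
  using assms unfolding incident_edges_def cedges_def
  by (auto simp: insert_commute nth_eq_iff_index_eq)

definition Cyc_neighbours :: "(nat \<Rightarrow> nat list) \<Rightarrow> nat \<Rightarrow> nat \<Rightarrow> vtx set" where
  "Cyc_neighbours ord i j = {SA i j, SC i j, Cl j} \<union>
     (\<lambda>k. SC i (ord i ! k)) ` {k. k < length (ord i) \<and> ord i ! (Suc k mod length (ord i)) = j}"

lemma incident_edges_Cyc:
  "incident_edges (cedges p C ord) (Cyc i j) \<subseteq> (\<lambda>u. {Cyc i j, u}) ` Cyc_neighbours ord i j"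
  unfolding incident_edges_def cedges_def Cyc_neighbours_def by (auto simp: insert_commute)

lemma finite_Cyc_neighbours: "finite (Cyc_neighbours ord i j)"
  unfolding Cyc_neighbours_def by simp

lemma card_Cyc_neighbours:
  assumes "distinct (ord i)" shows "card (Cyc_neighbours ord i j) \<le> 4"
proof -
  let ?K = "{k. k < length (ord i) \<and> ord i ! (Suc k mod length (ord i)) = j}"
  have "card (Cyc_neighbours ord i j)
      \<le> card {SA i j, SC i j, Cl j} + card ((\<lambda>k. SC i (ord i ! k)) ` ?K)"
    unfolding Cyc_neighbours_def by (rule card_Un_le)
  also have "\<dots> \<le> 3 + card ?K"
    by (intro add_mono card_image_le) (auto simp: card_insert_if)
  also have "\<dots> \<le> 4"
    using card_nth_Suc_mod_eq_le_1[OF assms] by simp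
  finally show ?thesis .
qed

lemma sparse_if_average_degree_le_4:
  fixes e n m :: nat
  assumes "2 * e \<le> 4 * n" and "5 * m * n \<le> e * (2 * m + 1)" and "3 \<le> m"
  shows "n = 0"
proof -
  have "10 * (m * n) \<le> 2 * e * (2 * m + 1)" using assms(2) by simp
  also have "\<dots> \<le> 4 * n * (2 * m + 1)" using assms(1) by (rule mult_right_mono) simp
  also have "\<dots> = 8 * (m * n) + 4 * n" by (simp add: algebra_simps)
  finally have "2 * (m * n) \<le> 4 * n" by simp
  moreover have "3 * n \<le> m * n" using assms(3) by simp
  ultimately show ?thesis by linarith
qed

text \<open>Here a, b, c, d count the saturated cycle vertices, the unsaturated cycle vertices, the
  apex-subdivision vertices and the remaining non-apex branch vertices, the apex being a branch
  vertex.\<close>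

lemma dense_forces_tight_counts:
  fixes e m a b c d :: nat
  assumes "2 * e \<le> 5 * a + 4 * b + 3 * c + 3 * d"
    and "5 * m * (1 + a + b + c + d) \<le> e * (2 * m + 1)"
    and "a \<le> 2 * m + d" and "3 \<le> m"
  shows "b = 0 \<and> c = 0 \<and> d = 0 \<and> a = 2 * m"
proof -
  have "10 * m * (1 + a + b + c + d) \<le> (5 * a + 4 * b + 3 * c + 3 * d) * (2 * m + 1)"
    using assms(2) mult_right_mono[OF assms(1), of "2 * m + 1"] by (simp add: algebra_simps)
  then have "10 * m + 2 * (m * b) + 4 * (m * c) + 4 * (m * d) \<le> 5 * a + 4 * b + 3 * c + 3 * d"
    by (simp add: algebra_simps)
  moreover have "3 * b \<le> m * b" "3 * c \<le> m * c" "3 * d \<le> m * d" using assms(4) by simp_all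
  ultimately show ?thesis using assms(3) by linarith
qed

lemma three_le_length_clauses:
  assumes clauses: "\<forall>j < length C. card (C ! j) = 3 \<and> C ! j \<subseteq> {..<p}"
    and occ3: "\<forall>i < p. card (occ C i) \<ge> 3" and "C \<noteq> []"
  shows "3 \<le> length C"
proof -
  have "C ! 0 \<noteq> {}" "C ! 0 \<subseteq> {..<p}" using clauses \<open>C \<noteq> []\<close> by fastforce+
  then obtain i where "i < p" by blast
  have "card (occ C i) \<le> card {..<length C}"
    unfolding occ_def by (intro card_mono) auto
  then show ?thesis using occ3 \<open>i < p\<close> by fastforce
qed

locale formula_embedding =
  half_shallow_embedding VH EH "cverts p C ord" "cedges p C ord" f s S
  for p :: nat and C :: "nat set list" and ord :: "nat \<Rightarrow> nat list"
    and VH :: "'h set" and EH and f and s and S +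
  assumes clauses: "\<forall>j < length C. card (C ! j) = 3 \<and> C ! j \<subseteq> {..<p}"
    and orders: "valid_orders p C ord"
begin

lemma distinct_ord: "i < p \<Longrightarrow> distinct (ord i)"
  using orders unfolding valid_orders_def by blast

lemma finite_clause: "j < length C \<Longrightarrow> finite (C ! j)"
  using clauses by (metis card.infinite zero_neq_numeral)

lemma branch_in_cverts: "v \<in> f ` VH \<Longrightarrow> v \<in> cverts p C ord"
  using f_into by blast

lemma card_used_at_SA: "card (used_at (SA i j)) \<le> 2"
  by (rule card_used_at_le[OF incident_edges_SA]) (auto simp: card_insert_if)

lemma card_used_at_Cl:
  assumes "j < length C" shows "card (used_at (Cl j)) \<le> 3"
proof (rule card_used_at_le[OF incident_edges_Cl])
  show "finite ((\<lambda>i. Cyc i j) ` (C ! j))" using finite_clause[OF assms] by simp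
  show "card ((\<lambda>i. Cyc i j) ` (C ! j)) \<le> 3"
    using card_image_le[OF finite_clause[OF assms]] clauses assms by simp
qed

lemma card_used_at_SC:
  assumes "i < p" "j \<in> set (ord i)" shows "card (used_at (SC i j)) \<le> 2"
proof -
  obtain k where k: "k < length (ord i)" "j = ord i ! k"
    using assms(2) by (metis in_set_conv_nth)
  show ?thesis unfolding k(2)
    by (rule card_used_at_le[OF incident_edges_SC[where ord = ord and i = i,
          OF distinct_ord[OF assms(1)] k(1)]])
      (auto simp: card_insert_if)
qed

lemma card_used_at_Cyc: "i < p \<Longrightarrow> card (used_at (Cyc i j)) \<le> 4"
  by (rule card_used_at_le[OF incident_edges_Cyc finite_Cyc_neighbours
      card_Cyc_neighbours[OF distinct_ord]])

lemma card_used_at_Cyc_unsaturated: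
  assumes "i < p" "\<not> saturated (Cyc i j)" shows "card (used_at (Cyc i j)) \<le> 3"
proof (rule card_used_at_unsaturated[OF incident_edges_Cyc finite_Cyc_neighbours _ assms(2)])
  show "card (Cyc_neighbours ord i j) \<le> Suc 3"
    using card_Cyc_neighbours[where ord = ord, OF distinct_ord[OF assms(1)]] by simp
qed

definition sat_Cyc :: "vtx set" where
  "sat_Cyc = {Cyc i j | i j. Cyc i j \<in> f ` VH \<and> saturated (Cyc i j)}"

definition unsat_Cyc :: "vtx set" where
  "unsat_Cyc = {Cyc i j | i j. Cyc i j \<in> f ` VH \<and> \<not> saturated (Cyc i j)}"

definition branch_SA :: "vtx set" where
  "branch_SA = {SA i j | i j. SA i j \<in> f ` VH}"

definition other_branch :: "vtx set" where
  "other_branch = f ` VH - insert Apex (sat_Cyc \<union> unsat_Cyc \<union> branch_SA)"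

lemma finite_classes:
  "finite sat_Cyc" "finite unsat_Cyc" "finite branch_SA" "finite other_branch"
proof -
  have "sat_Cyc \<subseteq> f ` VH" "unsat_Cyc \<subseteq> f ` VH" "branch_SA \<subseteq> f ` VH"
    "other_branch \<subseteq> f ` VH"
    unfolding sat_Cyc_def unsat_Cyc_def branch_SA_def other_branch_def by auto
  then show "finite sat_Cyc" "finite unsat_Cyc" "finite branch_SA" "finite other_branch"
    using finite_VH by (auto intro: finite_subset)
qed

lemma sum_branch_classes:
  "(\<Sum>v\<in>f ` VH. g v) = (if Apex \<in> f ` VH then g Apex else 0)
    + sum g sat_Cyc + sum g unsat_Cyc + sum g branch_SA + sum g other_branch"
proof -
  let ?A = "f ` VH \<inter> {Apex}"
  have disj: "?A \<inter> sat_Cyc = {}" "(?A \<union> sat_Cyc) \<inter> unsat_Cyc = {}"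
    "(?A \<union> sat_Cyc \<union> unsat_Cyc) \<inter> branch_SA = {}"
    "(?A \<union> sat_Cyc \<union> unsat_Cyc \<union> branch_SA) \<inter> other_branch = {}"
    unfolding sat_Cyc_def unsat_Cyc_def branch_SA_def other_branch_def by auto
  have "f ` VH = ?A \<union> sat_Cyc \<union> unsat_Cyc \<union> branch_SA \<union> other_branch"
    unfolding sat_Cyc_def unsat_Cyc_def branch_SA_def other_branch_def by auto
  then have "sum g (f ` VH)
      = sum g (?A \<union> sat_Cyc \<union> unsat_Cyc \<union> branch_SA \<union> other_branch)"
    by (rule arg_cong)
  also have "\<dots> = sum g ?A + sum g sat_Cyc + sum g unsat_Cyc + sum g branch_SA
      + sum g other_branch"
    using finite_classes finite_VH disj by (simp add: sum.union_disjoint)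
  finally have "sum g (f ` VH) = sum g ?A + sum g sat_Cyc + sum g unsat_Cyc + sum g branch_SA
      + sum g other_branch" .
  moreover have "sum g ?A = (if Apex \<in> f ` VH then g Apex else 0)"
    by auto
  ultimately show ?thesis by simp
qed

lemma Cyc_branch_index: "Cyc i j \<in> f ` VH \<Longrightarrow> i < p \<and> j < length C \<and> i \<in> C ! j"
  using branch_in_cverts[of "Cyc i j"] orders unfolding cverts_def valid_orders_def occ_def by auto

lemma card_used_at_Apex: "card (used_at Apex) \<le> card branch_SA + card sat_Cyc + card unsat_Cyc"
proof -
  let ?SA_of = "\<lambda>v. case v of Cyc i j \<Rightarrow> SA i j | _ \<Rightarrow> v"
  let ?X = "branch_SA \<union> sat_Cyc \<union> unsat_Cyc"
  have "used_at Apex \<subseteq> (\<lambda>v. {Apex, ?SA_of v}) ` ?X"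
  proof
    fix g assume g: "g \<in> used_at Apex"
    then obtain i j where gij: "g = {Apex, SA i j}"
      using used_at_incident incident_edges_Apex by blast
    show "g \<in> (\<lambda>v. {Apex, ?SA_of v}) ` ?X"
    proof (cases "SA i j \<in> f ` VH")
      case True
      then have "SA i j \<in> ?X" unfolding branch_SA_def by blast
      then show ?thesis using gij by force
    next
      case False
      obtain u where u: "u \<noteq> Apex" "u \<in> f ` VH" "{u, SA i j} \<in> cedges p C ord"
        using used_through_subdivision[OF g[unfolded gij] False] by metis
      have "u \<in> {Apex, Cyc i j}"
        by (rule neighbour_mem[OF incident_edges_SA u(3)]) simp
      with u(1) have "Cyc i j \<in> ?X"
        using u(2) unfolding sat_Cyc_def unsat_Cyc_def by auto
      then show ?thesis using gij by force
    qed
  qed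
  then have "card (used_at Apex) \<le> card ((\<lambda>v. {Apex, ?SA_of v}) ` ?X)"
    using finite_classes by (intro card_mono) auto
  also have "\<dots> \<le> card ?X"
    using finite_classes by (intro card_image_le) auto
  also have "\<dots> \<le> card branch_SA + card sat_Cyc + card unsat_Cyc"
    by (meson add_mono card_Un_le le_trans order_refl)
  finally show ?thesis .
qed

lemma card_used_at_other_branch:
  assumes "v \<in> other_branch" shows "card (used_at v) \<le> 3"
proof -
  have B: "v \<in> f ` VH" "v \<notin> insert Apex (sat_Cyc \<union> unsat_Cyc \<union> branch_SA)"
    using assms unfolding other_branch_def by auto
  then have "v \<noteq> Apex" "v \<noteq> Cyc i j" "v \<noteq> SA i j" for i j
    unfolding sat_Cyc_def unsat_Cyc_def branch_SA_def by blast+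
  with branch_in_cverts[OF B(1)]
  consider j where "v = Cl j" "j < length C"
    | i j where "v = SC i j" "i < p" "j \<in> set (ord i)"
    unfolding cverts_def by auto
  then show ?thesis
  proof cases
    case 1 then show ?thesis using card_used_at_Cl by simp
  next
    case 2 then show ?thesis using card_used_at_SC[of i j] by simp
  qed
qed

lemma card_used_at_sat_Cyc: "v \<in> sat_Cyc \<Longrightarrow> card (used_at v) \<le> 4"
  unfolding sat_Cyc_def using card_used_at_Cyc Cyc_branch_index by blast

lemma card_used_at_unsat_Cyc: "v \<in> unsat_Cyc \<Longrightarrow> card (used_at v) \<le> 3"
  unfolding unsat_Cyc_def using card_used_at_Cyc_unsaturated Cyc_branch_index by blast

lemma card_used_at_branch_SA: "v \<in> branch_SA \<Longrightarrow> card (used_at v) \<le> 2"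
  unfolding branch_SA_def using card_used_at_SA by blast

lemma double_card_edges_le:
  "2 * card EH \<le> (if Apex \<in> f ` VH then card branch_SA + card sat_Cyc + card unsat_Cyc else 0)
    + 4 * card sat_Cyc + 3 * card unsat_Cyc + 2 * card branch_SA + 3 * card other_branch"
proof -
  have bound: "(\<Sum>v\<in>A. card (used_at v)) \<le> card A * k"
    if "\<And>v. v \<in> A \<Longrightarrow> card (used_at v) \<le> k" for A k
    using sum_bounded_above[of A "\<lambda>v. card (used_at v)" k] that by simp
  have "(\<Sum>v\<in>sat_Cyc. card (used_at v)) \<le> card sat_Cyc * 4"
    "(\<Sum>v\<in>unsat_Cyc. card (used_at v)) \<le> card unsat_Cyc * 3"
    "(\<Sum>v\<in>branch_SA. card (used_at v)) \<le> card branch_SA * 2"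
    "(\<Sum>v\<in>other_branch. card (used_at v)) \<le> card other_branch * 3"
    using card_used_at_sat_Cyc card_used_at_unsat_Cyc card_used_at_branch_SA
      card_used_at_other_branch by (blast intro: bound)+
  moreover have "(if Apex \<in> f ` VH then card (used_at Apex) else 0)
      \<le> (if Apex \<in> f ` VH then card branch_SA + card sat_Cyc + card unsat_Cyc else 0)"
    using card_used_at_Apex by simp
  ultimately show ?thesis
    using double_card_edges_eq_sum_used_at sum_branch_classes[of "\<lambda>v. card (used_at v)"]
    by linarith
qed

lemma card_VH_classes:
  "card VH = (if Apex \<in> f ` VH then 1 else 0)
    + card sat_Cyc + card unsat_Cyc + card branch_SA + card other_branch"
  using sum_branch_classes[of "\<lambda>_. 1 :: nat"] card_image[OF inj_f] by simp

definition sat_vars :: "nat \<Rightarrow> nat set" where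
  "sat_vars j = {i \<in> C ! j. Cyc i j \<in> sat_Cyc}"

lemma finite_sat_vars: "j < length C \<Longrightarrow> finite (sat_vars j)"
  unfolding sat_vars_def using finite_clause by simp

lemma card_sat_Cyc_le_sum: "card sat_Cyc \<le> (\<Sum>j<length C. card (sat_vars j))"
proof -
  have "sat_Cyc \<subseteq> (\<Union>j<length C. (\<lambda>i. Cyc i j) ` sat_vars j)"
    unfolding sat_vars_def sat_Cyc_def using Cyc_branch_index by blast
  then have "card sat_Cyc \<le> card (\<Union>j<length C. (\<lambda>i. Cyc i j) ` sat_vars j)"
    using finite_sat_vars by (intro card_mono) auto
  also have "\<dots> \<le> (\<Sum>j<length C. card ((\<lambda>i. Cyc i j) ` sat_vars j))"
    by (rule card_UN_le) simp
  also have "\<dots> \<le> (\<Sum>j<length C. card (sat_vars j))"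
    using finite_sat_vars by (intro sum_mono card_image_le) simp
  finally show ?thesis .
qed

text \<open>If the clause vertex Cl j is not a branch vertex, the clause edges of all saturated
  cycle vertices of clause j run through Cl j as the subdivision vertex of a single H-edge.\<close>

lemma card_sat_vars_le_2:
  assumes j: "j < length C" and Cl: "Cl j \<notin> f ` VH"
  shows "card (sat_vars j) \<le> 2"
proof -
  have through_Cl: "\<exists>e\<in>S. s e = Cl j \<and> Cyc i j \<in> f ` e" if i: "i \<in> sat_vars j" for i
  proof -
    have "Cyc i j \<in> f ` VH" "saturated (Cyc i j)" "i \<in> C ! j"
      using i unfolding sat_vars_def sat_Cyc_def by auto
    moreover have "{Cyc i j, Cl j} \<in> incident_edges (cedges p C ord) (Cyc i j)"
      using Cl_edge[OF j \<open>i \<in> C ! j\<close>] unfolding incident_edges_def by (simp add: insert_commute)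
    ultimately have "{Cyc i j, Cl j} \<in> used_at (Cyc i j)"
      unfolding saturated_def by blast
    from used_through_subdivision[OF this Cl] show ?thesis by (metis insertI1)
  qed
  show ?thesis
  proof (cases "sat_vars j = {}")
    case False
    then obtain e0 where e0: "e0 \<in> S" "s e0 = Cl j" using through_Cl by blast
    have "(\<lambda>i. Cyc i j) ` sat_vars j \<subseteq> f ` e0"
    proof
      fix v assume "v \<in> (\<lambda>i. Cyc i j) ` sat_vars j"
      then obtain i e where "v = Cyc i j" "e \<in> S" "s e = Cl j" "Cyc i j \<in> f ` e"
        using through_Cl by blast
      moreover from this have "e = e0" using inj_s e0 by (metis inj_onD)
      ultimately show "v \<in> f ` e0" by simp
    qed
    moreover have "e0 \<in> EH" using e0 subdivided_subset by blast
    moreover from this have "finite e0" using edge_subset finite_VH finite_subset by blast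
    ultimately have "card ((\<lambda>i. Cyc i j) ` sat_vars j) \<le> card e0"
      using card_image_le card_mono finite_imageI le_trans by metis
    moreover have "card ((\<lambda>i. Cyc i j) ` sat_vars j) = card (sat_vars j)"
      by (rule card_image) (simp add: inj_on_def)
    ultimately show ?thesis using card_edge[OF \<open>e0 \<in> EH\<close>] by simp
  qed simp
qed

lemma card_sat_Cyc_le: "card sat_Cyc \<le> 2 * length C + card other_branch"
proof -
  let ?J = "{..<length C} \<inter> {j. Cl j \<in> f ` VH}"
  have "(\<Sum>j<length C. card (sat_vars j)) \<le> (\<Sum>j<length C. if Cl j \<in> f ` VH then 3 else 2)"
  proof (rule sum_mono)
    fix j assume j: "j \<in> {..<length C}"
    have "card (sat_vars j) \<le> card (C ! j)"
      using j finite_clause by (intro card_mono) (auto simp: sat_vars_def)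
    then show "card (sat_vars j) \<le> (if Cl j \<in> f ` VH then 3 else 2)"
      using j clauses card_sat_vars_le_2 by auto
  qed
  also have "\<dots> = 2 * length C + card ?J"
  proof -
    have "card ?J \<le> length C" using card_mono[of "{..<length C}" ?J] by auto
    then show ?thesis by (simp add: sum.If_cases Diff_eq[symmetric] card_Diff_subset_Int)
  qed
  also have "card ?J \<le> card other_branch"
  proof -
    have "Cl ` ?J \<subseteq> other_branch"
      unfolding other_branch_def sat_Cyc_def unsat_Cyc_def branch_SA_def by auto
    then have "card (Cl ` ?J) \<le> card other_branch"
      using finite_classes by (intro card_mono) auto
    moreover have "card (Cl ` ?J) = card ?J" by (rule card_image) (simp add: inj_on_def)
    ultimately show ?thesis by simp
  qed
  finally show ?thesis using card_sat_Cyc_le_sum by simp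
qed

lemma Cyc_successor_in_branch:
  assumes tight: "f ` VH \<subseteq> insert Apex sat_Cyc"
    and i: "i < p" and k: "k < length (ord i)" and Cyc: "Cyc i (ord i ! k) \<in> f ` VH"
  shows "Cyc i (ord i ! (Suc k mod length (ord i))) \<in> f ` VH"
proof -
  let ?j = "ord i ! k"
  have "saturated (Cyc i ?j)" using tight Cyc unfolding sat_Cyc_def by auto
  moreover have "{Cyc i ?j, SC i ?j} \<in> incident_edges (cedges p C ord) (Cyc i ?j)"
    using SC_edge[where ord = ord and i = i, OF i k] unfolding incident_edges_def by simp
  ultimately have used: "{Cyc i ?j, SC i ?j} \<in> used_at (Cyc i ?j)"
    unfolding saturated_def by blast
  have SC: "SC i ?j \<notin> f ` VH" using tight unfolding sat_Cyc_def by auto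
  obtain u where u: "u \<noteq> Cyc i ?j" "u \<in> f ` VH" "{u, SC i ?j} \<in> cedges p C ord"
    using used_through_subdivision[OF used SC] by metis
  have "u \<in> {Cyc i ?j, Cyc i (ord i ! (Suc k mod length (ord i)))}"
    by (rule neighbour_mem[OF incident_edges_SC[where ord = ord and i = i,
          OF distinct_ord[OF i] k] u(3)]) simp
  then show ?thesis using u(1,2) by auto
qed

lemma Cyc_in_branch_all_or_none:
  assumes tight: "f ` VH \<subseteq> insert Apex sat_Cyc"
    and i: "i < p" and j: "j \<in> set (ord i)" and j': "j' \<in> set (ord i)"
    and Cyc: "Cyc i j \<in> f ` VH"
  shows "Cyc i j' \<in> f ` VH"
proof -
  let ?n = "length (ord i)"
  obtain k0 where k0: "k0 < ?n" "ord i ! k0 = j" using j by (meson in_set_conv_nth)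
  obtain k where k: "k < ?n" "ord i ! k = j'" using j' by (meson in_set_conv_nth)
  have walk: "Cyc i (ord i ! ((k0 + d) mod ?n)) \<in> f ` VH" for d
  proof (induction d)
    case 0 then show ?case using Cyc k0 by simp
  next
    case (Suc d)
    have "0 < ?n" using k0(1) by linarith
    then have "(k0 + d) mod ?n < ?n" by simp
    from Cyc_successor_in_branch[OF tight i this Suc] show ?case
      by (simp add: mod_Suc_eq)
  qed
  have "(k0 + (?n - k0 + k)) mod ?n = k" using k0 k by simp
  then show ?thesis using walk[of "?n - k0 + k"] k by simp
qed

lemma exact_cover_if_tight:
  assumes tight: "f ` VH \<subseteq> insert Apex sat_Cyc" and full: "card sat_Cyc = 2 * length C"
  shows "\<exists>T \<subseteq> {..<p}. \<forall>j < length C. card (C ! j \<inter> T) = 1"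
proof -
  have le2: "card (sat_vars j) \<le> 2" if "j < length C" for j
    using card_sat_vars_le_2 that tight unfolding sat_Cyc_def by blast
  have "(\<Sum>j<length C. card (sat_vars j)) = (\<Sum>j<length C. 2)"
  proof (rule order_antisym)
    show "(\<Sum>j<length C. card (sat_vars j)) \<le> (\<Sum>j<length C. 2)"
      using le2 by (intro sum_mono) auto
    show "(\<Sum>j<length C. 2) \<le> (\<Sum>j<length C. card (sat_vars j))"
      using card_sat_Cyc_le_sum full by simp
  qed
  then have two: "card (sat_vars j) = 2" if "j < length C" for j
    by (rule sum_mono_inv) (use le2 that in auto)
  define T where "T = {i. i < p \<and> (\<exists>j\<in>set (ord i). Cyc i j \<notin> f ` VH)}"
  have "card (C ! j \<inter> T) = 1" if j: "j < length C" for j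
  proof -
    have in_T: "i \<in> T \<longleftrightarrow> Cyc i j \<notin> f ` VH" if i: "i \<in> C ! j" for i
    proof -
      have "i < p" "j \<in> set (ord i)"
        using i j clauses orders unfolding valid_orders_def occ_def by auto
      then show ?thesis
        unfolding T_def using Cyc_in_branch_all_or_none[OF tight] by blast
    qed
    have in_sat_vars: "i \<in> sat_vars j \<longleftrightarrow> Cyc i j \<in> f ` VH" if "i \<in> C ! j" for i
      using that tight unfolding sat_vars_def sat_Cyc_def by auto
    have "C ! j \<inter> T = C ! j - sat_vars j"
      using in_T in_sat_vars by blast
    then show ?thesis
      using two[OF j] clauses j finite_clause[OF j]
      by (simp add: card_Diff_subset sat_vars_def)
  qed
  moreover have "T \<subseteq> {..<p}" unfolding T_def by auto
  ultimately show ?thesis by blast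
qed

lemma tight_if_dense:
  assumes m: "3 \<le> length C" and pos: "0 < card VH"
    and dense: "5 * length C * card VH \<le> card EH * (2 * length C + 1)"
  shows "f ` VH \<subseteq> insert Apex sat_Cyc" and "card sat_Cyc = 2 * length C"
proof -
  have Apex: "Apex \<in> f ` VH"
  proof (rule ccontr)
    assume "Apex \<notin> f ` VH"
    then have "2 * card EH \<le> 4 * card VH"
      using double_card_edges_le card_VH_classes by simp
    from sparse_if_average_degree_le_4[OF this dense m] pos show False by simp
  qed
  have "card unsat_Cyc = 0 \<and> card branch_SA = 0 \<and> card other_branch = 0
      \<and> card sat_Cyc = 2 * length C"
    using double_card_edges_le card_VH_classes Apex dense card_sat_Cyc_le m
    by (intro dense_forces_tight_counts[where e = "card EH"]) simp_all
  then have "unsat_Cyc = {}" "branch_SA = {}" "other_branch = {}" "card sat_Cyc = 2 * length C"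
    using finite_classes by auto
  then show "f ` VH \<subseteq> insert Apex sat_Cyc" "card sat_Cyc = 2 * length C"
    unfolding other_branch_def by auto
qed

end

theorem lemma3:
  fixes p :: nat and C :: "nat set list" and ord :: "nat \<Rightarrow> nat list"
    and VH :: "'h set" and EH :: "'h set set"
  assumes clauses: "\<forall>j < length C. card (C ! j) = 3 \<and> C ! j \<subseteq> {..<p}"
    and occ3: "\<forall>i < p. card (occ C i) \<ge> 3"
    and ord: "valid_orders p C ord"
    and minor: "half_shallow_top_minor VH EH (cverts p C ord) (cedges p C ord)"
    and dens: "density VH EH \<ge> 5 * real (length C) / (2 * real (length C) + 1)"
  shows "\<exists>T \<subseteq> {..<p}. \<forall>j < length C. card (C ! j \<inter> T) = 1"
proof (cases "C = []")
  case True
  then show ?thesis by (intro exI[of _ "{}"]) simp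
next
  case False
  let ?m = "length C"
  have m: "3 \<le> ?m" using three_le_length_clauses[OF clauses occ3 False] .
  obtain f s S where "half_shallow_embedding VH EH (cverts p C ord) (cedges p C ord) f s S"
    using minor by (rule half_shallow_top_minorE)
  then interpret formula_embedding p C ord VH EH f s S
    using clauses ord by (simp add: formula_embedding_def formula_embedding_axioms_def)
  have "0 < 5 * real ?m / (2 * real ?m + 1)" using m by (intro divide_pos_pos) auto
  then have pos: "0 < card VH" using dens unfolding density_def by (cases "card VH = 0") auto
  then have "5 * real ?m * real (card VH) \<le> real (card EH) * (2 * real ?m + 1)"
    using dens unfolding density_def by (simp add: field_simps)
  then have "real (5 * ?m * card VH) \<le> real (card EH * (2 * ?m + 1))"
    by (simp add: algebra_simps)
  then have "5 * ?m * card VH \<le> card EH * (2 * ?m + 1)" by (simp only: of_nat_le_iff)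
  from tight_if_dense[OF m pos this] show ?thesis by (rule exact_cover_if_tight)
qed

end
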